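(* For any $d_y,M\in\mathbb{N}$ and any $\delta>0$, there exists a $\textsc{ReLU}$ network $f:\mathbb R\rightarrow\mathbb R^{d_y}$ of width $d_y$ such that $f(c)=\mathtt{decode}_M(c)$ for all $c\in\mathcal C_{d_yM}$. Furthermore, $f(\mathbb R)\subset[0,1]^{d_y}$.
   Context: For $n\in\mathbb N$, $\mathcal C_n:=\{0,2^{-n},2\cdot2^{-n},\dots,1-2^{-n}\}$ and $q_n:[0,1]\to\mathcal C_n$, $q_n(x)=\max\{c\in\mathcal C_n:c\le x\}$. For $y\in[0,1]^{d_y}$, $\mathtt{encode}_M(y):=\sum_{i=1}^{d_y}q_M(y_i)\,2^{-(i-1)M}\in\mathcal C_{d_yM}$. $\mathtt{decode}_M:\mathcal C_{d_yM}\to\mathcal C_M^{d_y}$ maps $c$ to the unique $\hat y\in\mathcal C_M^{d_y}$ with $\mathtt{encode}_M(\hat y)=c$ (i.e., $\sum_{i=1}^{d_y}\hat y_i 2^{-(i-1)M}=c$). A $\textsc{ReLU}$ network is $t_L\circ\sigma_{L-1}\circ\cdots\circ\sigma_1\circ t_1$ with affine $t_\ell:\mathbb R^{d_{\ell-1}}\to\mathbb R^{d_\ell}$ and coordinatewise $\textsc{ReLU}$ $\sigma_\ell$; its width is $\max\{d_1,\dots,d_{L-1}\}$. *)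

theory Defs
  imports Complex_Main
begin

definition dyadic :: "nat \<Rightarrow> real set" where
  "dyadic n = {real k / 2 ^ n | k. k < 2 ^ n}"

definition quant :: "nat \<Rightarrow> real \<Rightarrow> real" where
  "quant n x = Max {c \<in> dyadic n. c \<le> x}"

text \<open>Vectors in R^{d_y} are functions nat => real, coordinates 0..d_y-1
  (paper index i corresponds to index i-1 here).\<close>
definition encode :: "nat \<Rightarrow> nat \<Rightarrow> (nat \<Rightarrow> real) \<Rightarrow> real" where
  "encode dy M y = (\<Sum>i<dy. quant M (y i) / 2 ^ (i * M))"

text \<open>decode_M c = the unique yhat in C_M^{d_y} with encode_M yhat = c
  (coordinates beyond d_y fixed to 0 for uniqueness as a function).\<close>
definition decode :: "nat \<Rightarrow> nat \<Rightarrow> real \<Rightarrow> (nat \<Rightarrow> real)" where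
  "decode dy M c = (THE yh. (\<forall>i<dy. yh i \<in> dyadic M) \<and> (\<forall>i\<ge>dy. yh i = 0)
                        \<and> encode dy M yh = c)"

definition relu :: "real \<Rightarrow> real" where
  "relu x = max 0 x"

type_synonym layer = "(nat \<Rightarrow> nat \<Rightarrow> real) \<times> (nat \<Rightarrow> real)"

definition affine :: "layer \<Rightarrow> nat \<Rightarrow> (nat \<Rightarrow> real) \<Rightarrow> (nat \<Rightarrow> real)" where
  "affine l n x = (\<lambda>i. (\<Sum>j<n. fst l i j * x j) + snd l i)"

text \<open>dims = [d_0, d_1, ..., d_L], layers = [t_1, ..., t_L];
  network = t_L o sigma o ... o sigma o t_1.\<close>
fun net_eval :: "nat list \<Rightarrow> layer list \<Rightarrow> (nat \<Rightarrow> real) \<Rightarrow> (nat \<Rightarrow> real)" where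
  "net_eval (d0 # ds) [l] x = affine l d0 x"
| "net_eval (d0 # ds) (l # l' # ls) x = net_eval ds (l' # ls) (\<lambda>i. relu (affine l d0 x i))"
| "net_eval _ _ x = x"

definition net_width :: "nat list \<Rightarrow> nat" where
  "net_width dims = foldr max (butlast (tl dims)) 0"

definition relu_net :: "nat \<Rightarrow> nat \<Rightarrow> nat list \<Rightarrow> layer list \<Rightarrow> bool" where
  "relu_net din dout dims layers \<longleftrightarrow>
     layers \<noteq> [] \<and> length dims = length layers + 1 \<and>
     hd dims = din \<and> last dims = dout"

end

theory Submission
  imports Defs
begin

text \<open>Restricted to the finite grid \<open>C\<^sub>d\<^sub>y\<^sub>M\<close>, every coordinate of \<open>decode\<^sub>M\<close> is
  interpolated by a chain \<open>acc := max acc (a x + b)\<close> / \<open>acc := min acc (a x + b)\<close>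
  started at \<open>0\<close>, as is every function on a finite set of reals. A network of width \<open>d\<^sub>y\<close>
  keeps the input \<open>c\<close> in its last neuron and uses the second-to-last one as a scratch register
  in which \<open>max u v = v + relu (u - v)\<close> and \<open>min u v = v - relu (v - u)\<close> evaluate such a
  chain one step per layer; the result is written into neuron \<open>k\<close>, for \<open>k < d\<^sub>y - 1\<close>.
  The encoding equation then makes the last coordinate an affine function of \<open>c\<close> and the
  others, and the clamp \<open>x \<mapsto> 1 - relu (1 - relu x)\<close> maps everything into \<open>[0, 1]\<close>
  while fixing the grid values.\<close>

section \<open>Dyadic grids and decoding\<close>

lemma finite_dyadic: "finite (dyadic n)"
proof -
  have "dyadic n = (\<lambda>k. real k / 2 ^ n) ` {..<2 ^ n}"
    unfolding dyadic_def by auto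
  then show ?thesis by simp
qed

lemma dyadic_bounds:
  assumes "d \<in> dyadic n"
  shows "0 \<le> d" and "d < 1"
proof -
  obtain k :: nat where k: "d = real k / 2 ^ n" "k < 2 ^ n"
    using assms unfolding dyadic_def by auto
  then have "real k < 2 ^ n"
    by (metis of_nat_less_numeral_power_cancel_iff)
  with k show "0 \<le> d" and "d < 1" by simp_all
qed

lemma quant_dyadic: "d \<in> dyadic n \<Longrightarrow> quant n d = d"
  unfolding quant_def by (rule Max_eqI) (auto intro: finite_subset[OF _ finite_dyadic])

lemma dyadic_digits:
  assumes "\<forall>i<m. y i \<in> dyadic M"
  obtains a :: "nat \<Rightarrow> nat" where "\<forall>i<m. a i < 2 ^ M \<and> y i = real (a i) / 2 ^ M"
proof -
  have "\<forall>i\<in>{..<m}. \<exists>k. k < 2 ^ M \<and> y i = real k / 2 ^ M"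
    using assms unfolding dyadic_def by auto
  then show ?thesis
    using that by (metis lessThan_iff)
qed

definition digits_value :: "nat \<Rightarrow> nat \<Rightarrow> (nat \<Rightarrow> nat) \<Rightarrow> nat" where
  "digits_value B n a = (\<Sum>i<n. a i * B ^ (n - 1 - i))"

lemma digits_value_Suc: "digits_value B (Suc n) a = B * digits_value B n a + a n"
proof -
  have "(\<Sum>i<n. a i * B ^ (n - i)) = B * (\<Sum>i<n. a i * B ^ (n - 1 - i))"
    unfolding sum_distrib_left
    by (rule sum.cong) (auto simp: power_Suc[symmetric] Suc_diff_Suc)
  then show ?thesis
    unfolding digits_value_def by simp
qed

lemma digits_value_surj:
  assumes "B > 0" and "k < B ^ n"
  shows "\<exists>a. (\<forall>i<n. a i < B) \<and> digits_value B n a = k"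
  using assms(2)
proof (induction n arbitrary: k)
  case 0
  then show ?case by (simp add: digits_value_def)
next
  case (Suc n)
  have "k div B < B ^ n"
    using Suc.prems assms(1) by (simp add: div_less_iff_less_mult mult.commute)
  then obtain a where a: "\<forall>i<n. a i < B" "digits_value B n a = k div B"
    using Suc.IH by blast
  have "digits_value B n (a(n := k mod B)) = digits_value B n a"
    unfolding digits_value_def by (rule sum.cong) auto
  then have "digits_value B (Suc n) (a(n := k mod B)) = k"
    by (simp add: digits_value_Suc a(2))
  moreover have "\<forall>i<Suc n. (a(n := k mod B)) i < B"
    using a(1) assms(1) by (simp add: less_Suc_eq)
  ultimately show ?case by blast
qed

lemma digits_value_inj:
  assumes "B > 0" and "\<forall>i<n. a i < B" and "\<forall>i<n. b i < B"
    and "digits_value B n a = digits_value B n b"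
  shows "\<forall>i<n. a i = b i"
  using assms(2-)
proof (induction n)
  case 0
  then show ?case by simp
next
  case (Suc n)
  have eq: "B * digits_value B n a + a n = B * digits_value B n b + b n"
    using Suc.prems(3) by (simp add: digits_value_Suc)
  have "a n < B" "b n < B"
    using Suc.prems(1,2) by simp_all
  then have "(B * digits_value B n a + a n) mod B = a n"
    and "(B * digits_value B n a + a n) div B = digits_value B n a"
    and "(B * digits_value B n b + b n) mod B = b n"
    and "(B * digits_value B n b + b n) div B = digits_value B n b"
    using assms(1) by simp_all
  with eq have "a n = b n" and "digits_value B n a = digits_value B n b"
    by metis+
  with Suc show ?case
    by (simp add: less_Suc_eq)
qed

lemma encode_digits:
  assumes "\<forall>i<dy. a i < 2 ^ M \<and> y i = real (a i) / 2 ^ M"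
  shows "encode dy M y = real (digits_value (2 ^ M) dy a) / 2 ^ (dy * M)"
proof -
  have term_eq: "quant M (y i) / 2 ^ (i * M) = real (a i * (2 ^ M) ^ (dy - 1 - i)) / 2 ^ (dy * M)"
    if "i < dy" for i
  proof -
    have "y i \<in> dyadic M"
      using assms that unfolding dyadic_def by auto
    moreover obtain j where "dy = Suc (i + j)"
      using less_imp_Suc_add[OF \<open>i < dy\<close>] by blast
    then have "dy * M = M + i * M + (dy - 1 - i) * M"
      by (simp add: algebra_simps)
    then have "(2::real) ^ (dy * M) = 2 ^ M * 2 ^ (i * M) * (2 ^ M) ^ (dy - 1 - i)"
      by (simp add: power_add power_mult mult.commute)
    ultimately show ?thesis
      using assms that by (simp add: quant_dyadic)
  qed
  show ?thesis
    unfolding encode_def digits_value_def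
    by (simp add: term_eq sum_divide_distrib)
qed

lemma encode_onto_dyadic:
  assumes "c \<in> dyadic (dy * M)"
  shows "\<exists>y. (\<forall>i<dy. y i \<in> dyadic M) \<and> (\<forall>i\<ge>dy. y i = 0) \<and> encode dy M y = c"
proof -
  obtain k :: nat where k: "c = real k / 2 ^ (dy * M)" "k < 2 ^ (dy * M)"
    using assms unfolding dyadic_def by auto
  then have "k < (2 ^ M) ^ dy"
    by (simp add: power_mult mult.commute)
  then obtain a where a: "\<forall>i<dy. a i < 2 ^ M" "digits_value (2 ^ M) dy a = k"
    using digits_value_surj[of "2 ^ M"] by auto
  define y where "y i = (if i < dy then real (a i) / 2 ^ M else 0)" for i
  have "encode dy M y = c"
    using a k(1) by (subst encode_digits[of _ a]) (simp_all add: y_def)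
  moreover have "\<forall>i<dy. y i \<in> dyadic M"
    using a(1) unfolding y_def dyadic_def by auto
  ultimately show ?thesis
    by (intro exI[of _ y]) (simp add: y_def)
qed

lemma encode_inj_on_dyadic:
  assumes "\<forall>i<dy. y i \<in> dyadic M" and "\<forall>i<dy. y' i \<in> dyadic M"
    and "encode dy M y = encode dy M y'"
  shows "\<forall>i<dy. y i = y' i"
proof -
  obtain a where a: "\<forall>i<dy. a i < 2 ^ M \<and> y i = real (a i) / 2 ^ M"
    using dyadic_digits[OF assms(1)] by blast
  obtain a' where a': "\<forall>i<dy. a' i < 2 ^ M \<and> y' i = real (a' i) / 2 ^ M"
    using dyadic_digits[OF assms(2)] by blast
  have "digits_value (2 ^ M) dy a = digits_value (2 ^ M) dy a'"
    using assms(3) unfolding encode_digits[OF a] encode_digits[OF a'] by simp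
  then have "\<forall>i<dy. a i = a' i"
    using a a' by (intro digits_value_inj) auto
  with a a' show ?thesis
    by simp
qed

lemma decode_unique:
  assumes "c \<in> dyadic (dy * M)"
  shows "\<exists>!y. (\<forall>i<dy. y i \<in> dyadic M) \<and> (\<forall>i\<ge>dy. y i = 0) \<and> encode dy M y = c"
proof (rule ex_ex1I)
  show "\<exists>y. (\<forall>i<dy. y i \<in> dyadic M) \<and> (\<forall>i\<ge>dy. y i = 0) \<and> encode dy M y = c"
    using encode_onto_dyadic[OF assms] .
next
  fix y y'
  assume y: "(\<forall>i<dy. y i \<in> dyadic M) \<and> (\<forall>i\<ge>dy. y i = 0) \<and> encode dy M y = c"
    and y': "(\<forall>i<dy. y' i \<in> dyadic M) \<and> (\<forall>i\<ge>dy. y' i = 0) \<and> encode dy M y' = c"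
  then have "\<forall>i<dy. y i = y' i"
    using encode_inj_on_dyadic[of dy y M y'] by simp
  with y y' show "y = y'"
    by (metis not_le ext)
qed

lemma
  assumes "c \<in> dyadic (dy * M)"
  shows decode_in_dyadic: "i < dy \<Longrightarrow> decode dy M c i \<in> dyadic M"
    and encode_decode: "encode dy M (decode dy M c) = c"
  using theI'[OF decode_unique[OF assms]] unfolding decode_def by blast+

lemma decode_last:
  assumes "c \<in> dyadic (dy * M)" and "dy \<ge> 1"
  shows "decode dy M c (dy - 1)
    = 2 ^ ((dy - 1) * M) * (c - (\<Sum>i<dy - 1. decode dy M c i / 2 ^ (i * M)))"
proof -
  have "c = (\<Sum>i<dy. decode dy M c i / 2 ^ (i * M))"
    using encode_decode[OF assms(1)] decode_in_dyadic[OF assms(1)]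
    unfolding encode_def by (simp add: quant_dyadic)
  also have "\<dots> = decode dy M c (dy - 1) / 2 ^ ((dy - 1) * M)
      + (\<Sum>i<dy - 1. decode dy M c i / 2 ^ (i * M))"
    using assms(2) by (cases dy) simp_all
  finally show ?thesis
    by (simp add: field_simps)
qed

section \<open>Max-min chains\<close>

datatype chain_step = Max_aff real real | Min_aff real real

fun apply_step :: "chain_step \<Rightarrow> real \<Rightarrow> real \<Rightarrow> real" where
  "apply_step (Max_aff a b) x acc = max acc (a * x + b)"
| "apply_step (Min_aff a b) x acc = min acc (a * x + b)"

definition chain_eval :: "chain_step list \<Rightarrow> real \<Rightarrow> real" where
  "chain_eval ps x = foldl (\<lambda>acc p. apply_step p x acc) 0 ps"

lemma chain_eval_snoc: "chain_eval (ps @ [p]) x = apply_step p x (chain_eval ps x)"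
  unfolding chain_eval_def by simp

lemma chain_interpolation:
  fixes v :: "real \<Rightarrow> real"
  assumes "finite X"
  shows "\<exists>ps. \<forall>x\<in>X. chain_eval ps x = v x"
  using assms
proof (induction X rule: finite_linorder_max_induct)
  case empty
  then show ?case by simp
next
  case (insert b X)
  then obtain ps where ps: "\<forall>x\<in>X. chain_eval ps x = v x"
    by blast
  define S where "S = (\<Sum>a\<in>X. \<bar>v b - v a\<bar> / (b - a))"
  have slope: "\<bar>v b - v x\<bar> \<le> S * (b - x)" if "x \<in> X" for x
  proof -
    have "\<bar>v b - v x\<bar> / (b - x) \<le> S"
      unfolding S_def by (rule member_le_sum) (use insert that in auto)
    moreover have "b - x > 0"
      using insert that by auto
    ultimately show ?thesis
      by (simp add: divide_le_eq)
  qed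
  \<comment> \<open>As \<open>b\<close> lies to the right of \<open>X\<close>, the line through \<open>(b, v b)\<close> of slope \<open>S\<close> (resp. \<open>-S\<close>)
    stays below (resp. above) \<open>v\<close> on \<open>X\<close>, so appending it only changes the value at \<open>b\<close>.\<close>
  define p where "p = (if chain_eval ps b \<le> v b then Max_aff S (v b - S * b)
                       else Min_aff (- S) (v b + S * b))"
  have "chain_eval (ps @ [p]) x = v x" if "x \<in> insert b X" for x
  proof (cases "x = b")
    case True
    then show ?thesis
      by (simp add: chain_eval_snoc p_def)
  next
    case False
    with that have "x \<in> X" by simp
    then show ?thesis
      using slope[of x] ps by (auto simp: chain_eval_snoc p_def algebra_simps abs_le_iff)
  qed
  then show ?case by blast
qed

lemma relu_nonneg: "relu y \<ge> 0"
  unfolding relu_def by simp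

lemma relu_id: "y \<ge> 0 \<Longrightarrow> relu y = y"
  unfolding relu_def by simp

fun relu_stack :: "nat \<Rightarrow> layer list \<Rightarrow> (nat \<Rightarrow> real) \<Rightarrow> (nat \<Rightarrow> real)" where
  "relu_stack n [] x = x"
| "relu_stack n (l # ls) x = relu_stack n ls (\<lambda>i. relu (affine l n x i))"

lemma relu_stack_append: "relu_stack n (ls @ ls') x = relu_stack n ls' (relu_stack n ls x)"
  by (induction ls arbitrary: x) simp_all

lemma relu_stack_nonneg: "\<forall>j. x j \<ge> 0 \<Longrightarrow> relu_stack n ls x i \<ge> 0"
  by (induction ls arbitrary: x) (simp_all add: relu_nonneg)

lemma net_eval_uniform:
  "net_eval (d # replicate (length ls + 2) n) (l # ls @ [l']) x
     = affine l' n (relu_stack n ls (\<lambda>i. relu (affine l d x i)))"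
  by (induction ls arbitrary: d l x) simp_all

lemma net_width_uniform: "m \<ge> 2 \<Longrightarrow> net_width (d # replicate m n) = n"
proof -
  have "foldr max (replicate k n) 0 = (if k = 0 then 0 else n)" for k
    by (induction k) simp_all
  moreover assume "m \<ge> 2"
  ultimately show ?thesis
    unfolding net_width_def by (simp add: butlast_conv_take)
qed

definition update_layer :: "nat \<Rightarrow> (nat \<Rightarrow> real) \<Rightarrow> real \<Rightarrow> layer" where
  "update_layer t w b = ((\<lambda>i j. if i = t then w j else if j = i then 1 else 0),
                         (\<lambda>i. if i = t then b else 0))"

lemma sum_delta_mult:
  fixes x :: "nat \<Rightarrow> real"
  shows "i < n \<Longrightarrow> (\<Sum>j<n. (if j = i then a else 0) * x j) = a * x i"
  by (simp add: if_distrib[of "\<lambda>u. u * _"] cong: if_cong)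

lemma affine_update_layer:
  "i < n \<Longrightarrow> affine (update_layer t w b) n x i = (if i = t then (\<Sum>j<n. w j * x j) + b else x i)"
  unfolding affine_def update_layer_def using sum_delta_mult[of i n 1 x] by auto

definition two_point :: "nat \<Rightarrow> real \<Rightarrow> nat \<Rightarrow> real \<Rightarrow> nat \<Rightarrow> real" where
  "two_point u p v q = (\<lambda>j. (if j = u then p else 0) + (if j = v then q else 0))"

lemma sum_two_point:
  "u < n \<Longrightarrow> v < n \<Longrightarrow> u \<noteq> v \<Longrightarrow> (\<Sum>j<n. two_point u p v q j * x j) = p * x u + q * x v"
  unfolding two_point_def distrib_right sum.distrib by (simp add: sum_delta_mult)

definition broadcast_layer :: layer where
  "broadcast_layer = ((\<lambda>i j. 1), (\<lambda>i. 0))"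

lemma affine_broadcast_layer: "affine broadcast_layer 1 x = (\<lambda>_. x 0)"
  unfolding broadcast_layer_def affine_def by simp

definition flip_layer :: layer where
  "flip_layer = ((\<lambda>i j. if j = i then -1 else 0), (\<lambda>i. 1))"

lemma affine_flip_layer: "i < n \<Longrightarrow> affine flip_layer n x i = 1 - x i"
  unfolding affine_def flip_layer_def using sum_delta_mult[of i n "-1" x] by simp

lemma clamp_unit: "1 - relu (1 - relu y) \<in> {0..1}"
  unfolding relu_def by auto

lemma clamp_unit_id: "y \<in> {0..1} \<Longrightarrow> 1 - relu (1 - relu y) = y"
  unfolding relu_def by auto

section \<open>Evaluating chains inside the network\<close>

text \<open>Registers of a width-\<open>n\<close> state: \<open>n - 1\<close> holds the input \<open>c\<close>, \<open>n - 2\<close> is scratch.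
  While a chain is evaluated, its accumulator is \<open>acc_value (a, s, b) c z = a c + s z + b\<close>
  with \<open>z\<close> the scratch register; a step with affine part \<open>a c + b\<close> stores
  \<open>z = relu (\<plusminus>(acc - (a c + b)))\<close>, after which the accumulator is \<open>a c \<plusminus> z + b\<close>.\<close>

type_synonym acc_form = "real \<times> real \<times> real"

fun acc_value :: "acc_form \<Rightarrow> real \<Rightarrow> real \<Rightarrow> real" where
  "acc_value (a, s, b) c z = a * c + s * z + b"

fun form_after :: "chain_step \<Rightarrow> acc_form" where
  "form_after (Max_aff a b) = (a, 1, b)"
| "form_after (Min_aff a b) = (a, -1, b)"

fun step_layer :: "nat \<Rightarrow> acc_form \<Rightarrow> chain_step \<Rightarrow> layer" where
  "step_layer n (a', s, b') (Max_aff a b) =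
     update_layer (n - 2) (two_point (n - 1) (a' - a) (n - 2) s) (b' - b)"
| "step_layer n (a', s, b') (Min_aff a b) =
     update_layer (n - 2) (two_point (n - 1) (a - a') (n - 2) (- s)) (b - b')"

fun step_layers :: "nat \<Rightarrow> acc_form \<Rightarrow> chain_step list \<Rightarrow> layer list" where
  "step_layers n r [] = []"
| "step_layers n r (p # ps) = step_layer n r p # step_layers n (form_after p) ps"

fun final_form :: "acc_form \<Rightarrow> chain_step list \<Rightarrow> acc_form" where
  "final_form r [] = r"
| "final_form r (p # ps) = final_form (form_after p) ps"

fun write_layer :: "nat \<Rightarrow> nat \<Rightarrow> acc_form \<Rightarrow> layer" where
  "write_layer n t (a, s, b) = update_layer t (two_point (n - 1) a (n - 2) s) b"

definition chain_block :: "nat \<Rightarrow> nat \<Rightarrow> chain_step list \<Rightarrow> layer list" where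
  "chain_block n t ps = step_layers n (0, 0, 0) ps @ [write_layer n t (final_form (0, 0, 0) ps)]"

definition chain_blocks :: "nat \<Rightarrow> (nat \<Rightarrow> chain_step list) \<Rightarrow> nat \<Rightarrow> layer list" where
  "chain_blocks n pss m = concat (map (\<lambda>k. chain_block n k (pss k)) [0..<m])"

lemma step_layer_correct:
  fixes r :: acc_form and p :: chain_step and x :: "nat \<Rightarrow> real"
  assumes "n \<ge> 2" and "\<forall>j. x j \<ge> 0"
  defines "y \<equiv> \<lambda>i. relu (affine (step_layer n r p) n x i)"
  shows "\<forall>j<n. j \<noteq> n - 2 \<longrightarrow> y j = x j"
    and "acc_value (form_after p) (x (n - 1)) (y (n - 2))
           = apply_step p (x (n - 1)) (acc_value r (x (n - 1)) (x (n - 2)))"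
proof -
  obtain a' s b' where r: "r = (a', s, b')"
    by (cases r) auto
  have regs: "n - 1 < n" "n - 2 < n" "n - 1 \<noteq> n - 2"
    using assms(1) by auto
  show "\<forall>j<n. j \<noteq> n - 2 \<longrightarrow> y j = x j"
    using assms(2) unfolding y_def r by (cases p) (auto simp: affine_update_layer relu_id)
  show "acc_value (form_after p) (x (n - 1)) (y (n - 2))
          = apply_step p (x (n - 1)) (acc_value r (x (n - 1)) (x (n - 2)))"
  proof (cases p)
    case (Max_aff a b)
    then have "y (n - 2) = relu ((a' - a) * x (n - 1) + s * x (n - 2) + (b' - b))"
      using regs unfolding y_def r by (simp add: affine_update_layer sum_two_point)
    with Max_aff show ?thesis
      unfolding r by (simp add: relu_def max_def algebra_simps)
  next
    case (Min_aff a b)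
    then have "y (n - 2) = relu ((a - a') * x (n - 1) + - s * x (n - 2) + (b - b'))"
      using regs unfolding y_def r by (simp add: affine_update_layer sum_two_point)
    with Min_aff show ?thesis
      unfolding r by (simp add: relu_def min_def max_def algebra_simps)
  qed
qed

lemma step_layers_correct:
  fixes x :: "nat \<Rightarrow> real"
  assumes "n \<ge> 2" and "\<forall>j. x j \<ge> 0"
  shows "(\<forall>j<n. j \<noteq> n - 2 \<longrightarrow> relu_stack n (step_layers n r ps) x j = x j) \<and>
    acc_value (final_form r ps) (x (n - 1)) (relu_stack n (step_layers n r ps) x (n - 2))
      = foldl (\<lambda>acc p. apply_step p (x (n - 1)) acc) (acc_value r (x (n - 1)) (x (n - 2))) ps"
  using assms(2)
proof (induction ps arbitrary: r x)
  case Nil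
  then show ?case by simp
next
  case (Cons p ps)
  define y where "y = (\<lambda>i. relu (affine (step_layer n r p) n x i))"
  have kept: "\<forall>j<n. j \<noteq> n - 2 \<longrightarrow> y j = x j"
    and step: "acc_value (form_after p) (x (n - 1)) (y (n - 2))
                 = apply_step p (x (n - 1)) (acc_value r (x (n - 1)) (x (n - 2)))"
    using step_layer_correct[OF assms(1) Cons.prems] unfolding y_def by blast+
  moreover have "y (n - 1) = x (n - 1)"
    using kept assms(1) by simp
  moreover have "\<forall>j. y j \<ge> 0"
    unfolding y_def by (simp add: relu_nonneg)
  ultimately show ?case
    using Cons.IH[of y "form_after p"] by (simp flip: y_def)
qed

lemma chain_block_correct:
  fixes x :: "nat \<Rightarrow> real"
  assumes "n \<ge> 2" and "t \<le> n - 2" and "\<forall>j. x j \<ge> 0" and "chain_eval ps (x (n - 1)) \<ge> 0"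
  defines "y \<equiv> relu_stack n (chain_block n t ps) x"
  shows "y t = chain_eval ps (x (n - 1))"
    and "\<forall>j<n. j \<noteq> t \<and> j \<noteq> n - 2 \<longrightarrow> y j = x j"
proof -
  define z where "z = relu_stack n (step_layers n (0, 0, 0) ps) x"
  have kept: "\<forall>j<n. j \<noteq> n - 2 \<longrightarrow> z j = x j"
    and acc: "acc_value (final_form (0, 0, 0) ps) (z (n - 1)) (z (n - 2)) = chain_eval ps (x (n - 1))"
    using step_layers_correct[OF assms(1,3), of "(0, 0, 0)" ps] assms(1)
    unfolding z_def chain_eval_def by auto
  obtain a s b where final: "final_form (0, 0, 0) ps = (a, s, b)"
    by (cases "final_form (0, 0, 0) ps") auto
  have y: "y = (\<lambda>i. relu (affine (write_layer n t (a, s, b)) n z i))"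
    unfolding y_def z_def chain_block_def final by (simp add: relu_stack_append)
  have regs: "t < n" "n - 1 < n" "n - 2 < n" "n - 1 \<noteq> n - 2"
    using assms(1,2) by auto
  show "y t = chain_eval ps (x (n - 1))"
    using acc assms(4) regs unfolding y final
    by (simp add: affine_update_layer sum_two_point relu_id)
  have "z j \<ge> 0" for j
    using assms(3) unfolding z_def by (rule relu_stack_nonneg)
  then show "\<forall>j<n. j \<noteq> t \<and> j \<noteq> n - 2 \<longrightarrow> y j = x j"
    using kept assms(3) unfolding y by (simp add: affine_update_layer relu_id)
qed

lemma chain_blocks_correct:
  fixes x :: "nat \<Rightarrow> real"
  assumes "m \<le> n - 1" and "\<forall>j. x j \<ge> 0" and "\<forall>k<m. chain_eval (pss k) (x (n - 1)) \<ge> 0"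
  defines "y \<equiv> relu_stack n (chain_blocks n pss m) x"
  shows "(\<forall>j. y j \<ge> 0) \<and> y (n - 1) = x (n - 1) \<and> (\<forall>k<m. y k = chain_eval (pss k) (x (n - 1)))"
  using assms(1,3) unfolding y_def
proof (induction m)
  case 0
  then show ?case
    using assms(2) by (simp add: chain_blocks_def)
next
  case (Suc m)
  define y where "y = relu_stack n (chain_blocks n pss m) x"
  have IH: "(\<forall>j. y j \<ge> 0) \<and> y (n - 1) = x (n - 1) \<and> (\<forall>k<m. y k = chain_eval (pss k) (x (n - 1)))"
    using Suc unfolding y_def by simp
  have n: "n \<ge> 2" "m \<le> n - 2"
    using Suc.prems(1) by auto
  define y' where "y' = relu_stack n (chain_block n m (pss m)) y"
  have blocks: "relu_stack n (chain_blocks n pss (Suc m)) x = y'"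
    unfolding y'_def y_def chain_blocks_def by (simp add: relu_stack_append)
  have y_nonneg: "\<forall>j. y j \<ge> 0"
    using IH by blast
  have "chain_eval (pss m) (y (n - 1)) \<ge> 0"
    using IH Suc.prems(2) by simp
  note block = chain_block_correct[OF n y_nonneg this, folded y'_def]
  have "\<forall>j. y' j \<ge> 0"
    unfolding y'_def using y_nonneg by (simp add: relu_stack_nonneg)
  moreover have "y' (n - 1) = x (n - 1)"
  proof -
    have "n - 1 < n" "n - 1 \<noteq> m" "n - 1 \<noteq> n - 2"
      using n by auto
    then show ?thesis
      using block(2) IH by simp
  qed
  moreover have "\<forall>k<Suc m. y' k = chain_eval (pss k) (x (n - 1))"
    using block IH n by (auto simp: less_Suc_eq)
  ultimately show ?case
    unfolding blocks by blast
qed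

section \<open>The decoding network\<close>

definition decode_chain :: "nat \<Rightarrow> nat \<Rightarrow> nat \<Rightarrow> chain_step list" where
  "decode_chain dy M k = (SOME ps. \<forall>c\<in>dyadic (dy * M). chain_eval ps c = decode dy M c k)"

lemma chain_eval_decode_chain:
  "c \<in> dyadic (dy * M) \<Longrightarrow> chain_eval (decode_chain dy M k) c = decode dy M c k"
  using someI_ex[OF chain_interpolation[OF finite_dyadic, where v = "\<lambda>c. decode dy M c k"]]
  unfolding decode_chain_def by blast

definition last_digit_layer :: "nat \<Rightarrow> nat \<Rightarrow> layer" where
  "last_digit_layer dy M = update_layer (dy - 1)
     (\<lambda>j. if j = dy - 1 then 2 ^ ((dy - 1) * M)
          else if j < dy - 1 then - (2 ^ ((dy - 1) * M) / 2 ^ (j * M)) else 0) 0"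

lemma affine_last_digit_layer:
  assumes "c \<in> dyadic (dy * M)" and "dy \<ge> 1" and "i < dy"
    and "x (dy - 1) = c" and "\<forall>j<dy - 1. x j = decode dy M c j"
  shows "affine (last_digit_layer dy M) dy x i = decode dy M c i"
proof (cases "i = dy - 1")
  case True
  have "{..<dy} = insert (dy - 1) {..<dy - 1}"
    using assms(2) by auto
  then have "affine (last_digit_layer dy M) dy x i
      = 2 ^ ((dy - 1) * M) * c - (\<Sum>j<dy - 1. 2 ^ ((dy - 1) * M) / 2 ^ (j * M) * decode dy M c j)"
    using True assms(3-5)
    by (simp add: last_digit_layer_def affine_update_layer sum_negf)
  also have "\<dots> = decode dy M c i"
    using decode_last[OF assms(1,2)] True
    by (simp add: right_diff_distrib sum_distrib_left)
  finally show ?thesis .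
next
  case False
  then show ?thesis
    using assms(3,5) by (simp add: last_digit_layer_def affine_update_layer)
qed

definition decode_layers :: "nat \<Rightarrow> nat \<Rightarrow> layer list" where
  "decode_layers dy M = broadcast_layer # chain_blocks dy (decode_chain dy M) (dy - 1)
     @ [last_digit_layer dy M, flip_layer, flip_layer]"

definition decode_dims :: "nat \<Rightarrow> nat \<Rightarrow> nat list" where
  "decode_dims dy M = 1 # replicate (length (decode_layers dy M)) dy"

lemma relu_net_decode: "relu_net 1 dy (decode_dims dy M) (decode_layers dy M)"
  by (simp add: relu_net_def decode_dims_def decode_layers_def)

lemma net_width_decode: "net_width (decode_dims dy M) = dy"
  unfolding decode_dims_def by (rule net_width_uniform) (simp add: decode_layers_def)

lemma net_eval_decode:
  assumes "i < dy"
  shows "net_eval (decode_dims dy M) (decode_layers dy M) x i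
    = 1 - relu (1 - relu (affine (last_digit_layer dy M) dy
        (relu_stack dy (chain_blocks dy (decode_chain dy M) (dy - 1)) (\<lambda>_. relu (x 0))) i))"
proof -
  let ?hidden = "chain_blocks dy (decode_chain dy M) (dy - 1) @ [last_digit_layer dy M, flip_layer]"
  have layers: "decode_layers dy M = broadcast_layer # ?hidden @ [flip_layer]"
    unfolding decode_layers_def by simp
  have dims: "decode_dims dy M = 1 # replicate (length ?hidden + 2) dy"
    unfolding decode_dims_def layers by simp
  show ?thesis
    unfolding layers dims net_eval_uniform affine_broadcast_layer
    using assms by (simp add: relu_stack_append affine_flip_layer)
qed

lemma decode_net_range: "i < dy \<Longrightarrow> net_eval (decode_dims dy M) (decode_layers dy M) x i \<in> {0..1}"
  unfolding net_eval_decode by (rule clamp_unit)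

lemma decode_net_on_dyadic:
  assumes "c \<in> dyadic (dy * M)" and "i < dy"
  shows "net_eval (decode_dims dy M) (decode_layers dy M) (\<lambda>_. c) i = decode dy M c i"
proof -
  have digit_unit: "decode dy M c j \<in> {0..1}" if "j < dy" for j
    using dyadic_bounds[OF decode_in_dyadic[OF assms(1) that]] by simp
  define s where "s = relu_stack dy (chain_blocks dy (decode_chain dy M) (dy - 1)) (\<lambda>_. c)"
  have "c \<ge> 0"
    using dyadic_bounds(1)[OF assms(1)] .
  then have "s (dy - 1) = c \<and> (\<forall>k<dy - 1. s k = decode dy M c k)"
    using chain_blocks_correct[of "dy - 1" dy "\<lambda>_. c" "decode_chain dy M"] digit_unit
    unfolding s_def by (simp add: chain_eval_decode_chain[OF assms(1)])
  then have "affine (last_digit_layer dy M) dy s i = decode dy M c i"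
    using affine_last_digit_layer[OF assms(1) _ assms(2)] assms(2) by simp
  moreover have input: "(\<lambda>_::nat. relu c) = (\<lambda>_. c)"
    using \<open>c \<ge> 0\<close> by (simp add: relu_id)
  ultimately show ?thesis
    unfolding net_eval_decode[OF assms(2)] input s_def[symmetric]
    using digit_unit[OF assms(2)] by (simp add: relu_id clamp_unit_id)
qed

theorem lemma6:
  fixes dy M :: nat and \<delta> :: real
  assumes "dy \<ge> 1" and "M \<ge> 1" and "\<delta> > 0"
  shows "\<exists>dims layers. relu_net 1 dy dims layers \<and> net_width dims = dy \<and>
           (\<forall>c \<in> dyadic (dy * M). \<forall>i<dy. net_eval dims layers (\<lambda>_. c) i = decode dy M c i) \<and>
           (\<forall>x::real. \<forall>i<dy. net_eval dims layers (\<lambda>_. x) i \<in> {0..1})"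
  \<comment> \<open>None of the hypotheses is needed: \<open>\<delta>\<close> does not occur, and \<open>i < dy\<close> already forces \<open>dy \<ge> 1\<close>.\<close>
  using relu_net_decode net_width_decode decode_net_on_dyadic decode_net_range by blast

end
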